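(* Let $p$ be a prime number and let $n$ be a positive integer. Then $S_n(n)\equiv p \pmod{n}$ (i.e. $n\in\mathcal{M}_p$) if and only if all of the following hold: (i) the prime power factorization of $n$ has the form $n=p^s q_1\cdots q_r$, where $0\le s\le 2$ and $q_1,\dots,q_r$ are pairwise distinct primes different from $p$ (each appearing with exponent $1$); (ii) for every $i\in\{1,\dots,r\}$, $q_i-1$ divides $n$ and $n/q_i+p\equiv 0\pmod{q_i}$; (iii) if $s=1$, then $p-1\nmid n$; (iv) if $s=2$, then $p-1\mid n$ and $n/p^2+1\equiv 0\pmod{p}$.
   Context: For positive integers $k,n$ let $S_k(n)=\sum_{i=1}^{n} i^k$. For an integer $a$, $\mathcal{M}_a$ denotes the set of positive integers $n$ such that $S_n(n)\equiv a\pmod{n}$. *)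

theory Defs
  imports "HOL-Computational_Algebra.Primes" "HOL-Number_Theory.Cong"
begin

definition S :: "nat \<Rightarrow> nat \<Rightarrow> nat" where
  "S k n = (\<Sum>i=1..n. i ^ k)"

definition M :: "int \<Rightarrow> nat set" where
  "M a = {n. n > 0 \<and> [int (S n n) = a] (mod int n)}"

end

theory Submission
  imports Defs "HOL-Number_Theory.Number_Theory"
begin

text \<open>Both sides are local at the primes dividing \<open>n\<close>. Since \<open>i \<mapsto> i\<^sup>n\<close> is periodic modulo
\<open>q\<close> with period \<open>q\<close>, and modulo \<open>p\<^sup>2\<close> with period \<open>p\<close> when \<open>p dvd n\<close>, the sum \<open>S\<^sub>n(n)\<close> reduces
to \<open>(n/q) S\<^sub>n(q)\<close> modulo \<open>q\<close> and to \<open>(n/p\<^sup>2) p S\<^sub>n(p)\<close> modulo \<open>p\<^sup>2\<close>. By Fermat and a primitive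
root, \<open>S\<^sub>n(q) \<equiv> -1\<close> or \<open>0 (mod q)\<close> according as \<open>q - 1\<close> divides \<open>n\<close> or not. Comparing these
values with \<open>p\<close> prime by prime forces the shape of \<open>n\<close> and conditions (ii)--(iv), and the
Chinese remainder theorem gives the converse.\<close>

lemma S_add: "S k (a + b) = S k a + (\<Sum>i=1..b. (a + i) ^ k)"
  by (induction b) (simp_all add: S_def)

lemma S_mult_cong:
  assumes "\<And>t i. [(m * t + i) ^ k = i ^ k] (mod N)"
  shows "[S k (m * t) = t * S k m] (mod N)"
proof (induction t)
  case 0
  then show ?case by (simp add: S_def)
next
  case (Suc t)
  have "S k (m * Suc t) = S k (m * t) + (\<Sum>i=1..m. (m * t + i) ^ k)"
    using S_add[of k "m * t" m] by (simp add: add.commute)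
  moreover have "[(\<Sum>i=1..m. (m * t + i) ^ k) = S k m] (mod N)"
    unfolding S_def by (rule cong_sum) (rule assms)
  ultimately have "[S k (m * Suc t) = t * S k m + S k m] (mod N)"
    using cong_add[OF Suc] by simp
  then show ?case by (simp add: add.commute)
qed

lemma S_mult_cong_self: "[S k (m * t) = t * S k m] (mod m)"
proof (rule S_mult_cong)
  fix t i
  have "[m * t + i = i] (mod m)" by (simp add: cong_def)
  then show "[(m * t + i) ^ k = i ^ k] (mod m)" by (rule cong_pow)
qed

lemma power_shift_cong_square:
  fixes m t i k :: nat
  assumes "m dvd k"
  shows "[(m * t + i) ^ k = i ^ k] (mod m\<^sup>2)"
proof -
  have "(m * t + i) ^ m = i ^ m + (\<Sum>j=1..m. (m choose j) * (m * t) ^ j * i ^ (m - j))"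
    by (simp add: binomial atMost_atLeast0 sum.atLeast_Suc_atMost)
  moreover have "m\<^sup>2 dvd (\<Sum>j=1..m. (m choose j) * (m * t) ^ j * i ^ (m - j))"
  proof (rule dvd_sum)
    fix j :: nat
    assume "j \<in> {1..m}"
    show "m\<^sup>2 dvd (m choose j) * (m * t) ^ j * i ^ (m - j)"
    proof (cases "j = 1")
      case False
      with \<open>j \<in> {1..m}\<close> have "m\<^sup>2 dvd (m * t) ^ j"
        by (simp add: power_mult_distrib le_imp_power_dvd)
      then show ?thesis by simp
    qed (simp add: power2_eq_square)
  qed
  ultimately have "[(m * t + i) ^ m = i ^ m] (mod m\<^sup>2)"
    by (auto simp: cong_def)
  moreover obtain c where "k = m * c" using assms by blast
  ultimately show ?thesis
    using cong_pow by (metis power_mult)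
qed

lemma power_sum_prime_cong_dvd:
  fixes q k :: nat
  assumes "prime q" and "(q - 1) dvd k"
  shows "[(\<Sum>i=1..q-1. i ^ k) = q - 1] (mod q)"
proof -
  obtain c where c: "k = (q - 1) * c" using assms(2) by blast
  have "[i ^ k = 1] (mod q)" if "i \<in> {1..q-1}" for i
  proof -
    from that have "\<not> q dvd i" by (auto dest: dvd_imp_le)
    then have "[i ^ (q - 1) = 1] (mod q)" using fermat_theorem[OF assms(1)] by blast
    then show ?thesis using cong_pow[of _ 1 q c] by (simp add: c power_mult)
  qed
  then have "[(\<Sum>i=1..q-1. i ^ k) = (\<Sum>i=1..q-1. 1)] (mod q)" by (rule cong_sum)
  then show ?thesis by simp
qed

text \<open>Multiplication by a primitive root \<open>g\<close> permutes the nonzero residues, so the power sum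
  \<open>A\<close> satisfies \<open>A \<equiv> g\<^sup>k A\<close>, while \<open>g\<^sup>k \<noteq> 1\<close>.\<close>

lemma power_sum_prime_cong_not_dvd:
  fixes q k :: nat
  assumes q: "prime q" and k: "\<not> (q - 1) dvd k"
  shows "[(\<Sum>i=1..q-1. i ^ k) = 0] (mod q)"
proof -
  define U where "U = {1..q-1}"
  define A where "A = (\<Sum>i\<in>U. i ^ k)"
  have q1: "q > 1" using q prime_gt_1_nat by blast
  obtain g where "residue_primroot q g" using prime_primitive_root_exists[OF q1 q] by blast
  then have cg: "coprime q g" and "ord q g = q - 1"
    by (auto simp: residue_primroot_def totient_prime[OF q])
  then have ng: "\<not> [g ^ k = 1] (mod q)" using k ord_divides by metis
  define h where "h i = (g * i) mod q" for i
  have U_iff: "i \<in> U \<longleftrightarrow> i < q \<and> \<not> q dvd i" for i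
    using q1 by (cases "i = 0") (auto simp: U_def dest: dvd_imp_le)
  have "\<not> q dvd g" using cg q by (metis coprime_absorb_left not_prime_unit)
  then have "\<not> q dvd h i" if "i \<in> U" for i
    using that q by (simp add: U_iff h_def dvd_mod_iff prime_dvd_mult_iff)
  then have hU: "h ` U \<subseteq> U"
    using q1 by (auto simp: U_iff h_def)
  have "inj_on h U"
  proof
    fix i j assume "i \<in> U" "j \<in> U" "h i = h j"
    then have "[i * g = j * g] (mod q)" by (simp add: h_def cong_def mult.commute)
    then have "[i = j] (mod q)" using cg cong_mult_rcancel_nat coprime_commute by blast
    then show "i = j" using \<open>i \<in> U\<close> \<open>j \<in> U\<close> by (simp add: U_iff cong_def)
  qed
  with hU have "h ` U = U" by (simp add: U_def endo_inj_surj)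
  then have "A = (\<Sum>i\<in>U. h i ^ k)"
    using sum.reindex[OF \<open>inj_on h U\<close>, of "\<lambda>i. i ^ k"] by (simp add: A_def)
  also have "[(\<Sum>i\<in>U. h i ^ k) = (\<Sum>i\<in>U. g ^ k * i ^ k)] (mod q)"
    by (rule cong_sum) (simp add: h_def cong_def power_mod flip: power_mult_distrib)
  also have "(\<Sum>i\<in>U. g ^ k * i ^ k) = A * g ^ k"
    by (simp add: A_def sum_distrib_left mult.commute)
  finally have "[A * 1 = A * g ^ k] (mod q)" by simp
  with ng have "\<not> coprime A q"
    by (metis cong_mult_lcancel_nat cong_sym)
  then have "q dvd A"
    using q by (metis coprime_commute prime_imp_coprime)
  then show ?thesis by (simp add: A_def U_def cong_0_iff)
qed

lemma S_prime_cong: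
  fixes q k :: nat
  assumes q: "prime q" and "k > 0"
  shows "[S k q = (if (q - 1) dvd k then q - 1 else 0)] (mod q)"
proof -
  have "q > 0" using q prime_gt_0_nat by blast
  then have "S k q = (\<Sum>i=1..q-1. i ^ k) + q ^ k"
    using S_add[of k "q - 1" 1] by (simp add: S_def)
  moreover have "[q ^ k = 0] (mod q)" using \<open>k > 0\<close> by (simp add: cong_0_iff)
  ultimately show ?thesis
    using cong_add[OF power_sum_prime_cong_dvd[OF q] \<open>[q ^ k = 0] (mod q)\<close>]
      cong_add[OF power_sum_prime_cong_not_dvd[OF q] \<open>[q ^ k = 0] (mod q)\<close>]
    by auto
qed

lemma S_self_cong_prime:
  fixes q n :: nat
  assumes q: "prime q" and "q dvd n" and "n > 0"
  shows "[S n n = n div q * (if (q - 1) dvd n then q - 1 else 0)] (mod q)"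
proof -
  have "[S n n = n div q * S n q] (mod q)"
    using S_mult_cong_self[of n q "n div q"] \<open>q dvd n\<close> by simp
  also have "[n div q * S n q = n div q * (if (q - 1) dvd n then q - 1 else 0)] (mod q)"
    by (rule cong_scalar_left) (rule S_prime_cong[OF q \<open>n > 0\<close>])
  finally show ?thesis .
qed

lemma cong_mult_left_modulus_iff:
  fixes a b c m :: nat
  assumes "c > 0"
  shows "[c * a = c * b] (mod c * m) \<longleftrightarrow> [a = b] (mod m)"
  using assms unfolding cong_def mod_mult_mult1 by simp

lemma S_self_cong_prime_square:
  fixes p n :: nat
  assumes p: "prime p" and "p\<^sup>2 dvd n" and "n > 0"
  shows "[S n n = n div p\<^sup>2 * (p * (if (p - 1) dvd n then p - 1 else 0))] (mod p\<^sup>2)"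
proof -
  have "p dvd n" using \<open>p\<^sup>2 dvd n\<close> by (rule dvd_trans[rotated]) simp
  have "[S n n = n div p\<^sup>2 * S n (p * p)] (mod p\<^sup>2)"
    using S_mult_cong_self[of n "p\<^sup>2" "n div p\<^sup>2"] \<open>p\<^sup>2 dvd n\<close> by (simp add: power2_eq_square)
  also have "[n div p\<^sup>2 * S n (p * p) = n div p\<^sup>2 * (p * S n p)] (mod p\<^sup>2)"
    by (rule cong_scalar_left, rule S_mult_cong, rule power_shift_cong_square) fact
  also have "[n div p\<^sup>2 * (p * S n p) = n div p\<^sup>2 * (p * (if (p - 1) dvd n then p - 1 else 0))] (mod p\<^sup>2)"
  proof (rule cong_scalar_left)
    show "[p * S n p = p * (if (p - 1) dvd n then p - 1 else 0)] (mod p\<^sup>2)"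
      using S_prime_cong[OF p \<open>n > 0\<close>] p
      by (simp only: power2_eq_square cong_mult_left_modulus_iff prime_gt_0_nat)
  qed
  finally show ?thesis .
qed

lemma cong_mult_pred_modulus_iff:
  fixes a c q :: nat
  assumes "q > 0"
  shows "[a * (q - 1) = c] (mod q) \<longleftrightarrow> [a + c = 0] (mod q)"
proof -
  have "a * (q - 1) + a = a * q" using assms by (cases q) simp_all
  then have "[a * (q - 1) + a = 0] (mod q)" by (simp add: cong_0_iff)
  have "[a * (q - 1) = c] (mod q) \<longleftrightarrow> [a * (q - 1) + a = c + a] (mod q)"
    by (rule cong_add_rcancel_nat[symmetric])
  also have "\<dots> \<longleftrightarrow> [0 = c + a] (mod q)"
    using \<open>[a * (q - 1) + a = 0] (mod q)\<close> cong_sym cong_trans by blast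
  also have "\<dots> \<longleftrightarrow> [a + c = 0] (mod q)"
    by (simp add: cong_sym_eq add.commute)
  finally show ?thesis .
qed

lemma S_self_cong_prime_iff:
  fixes q n c :: nat
  assumes q: "prime q" and "q dvd n" and "n > 0" and "\<not> q dvd c"
  shows "[S n n = c] (mod q) \<longleftrightarrow> (q - 1) dvd n \<and> [n div q + c = 0] (mod q)"
proof -
  have "\<not> [c = 0] (mod q)" using \<open>\<not> q dvd c\<close> by (simp add: cong_0_iff)
  moreover note S_self_cong_prime[OF assms(1-3)]
  moreover have "[n div q * (q - 1) = c] (mod q) \<longleftrightarrow> [n div q + c = 0] (mod q)"
    by (rule cong_mult_pred_modulus_iff[OF prime_gt_0_nat[OF q]])
  ultimately show ?thesis
    by (cases "(q - 1) dvd n") (simp_all, (metis cong_sym cong_trans)+)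
qed

lemma S_self_cong_prime_conditions:
  fixes q n c :: nat
  assumes q: "prime q" and "q dvd n" and "n > 0" and "\<not> q dvd c" and "[S n n = c] (mod q)"
  shows "(q - 1) dvd n \<and> [n div q + c = 0] (mod q) \<and> \<not> q\<^sup>2 dvd n"
proof -
  have "(q - 1) dvd n \<and> [n div q + c = 0] (mod q)"
    using S_self_cong_prime_iff assms by blast
  moreover from this \<open>\<not> q dvd c\<close> have "\<not> q dvd n div q"
    by (auto simp: cong_0_iff dvd_add_right_iff)
  ultimately show ?thesis
    using q \<open>q dvd n\<close> by (simp add: dvd_div_iff_mult power2_eq_square prime_gt_0_nat)
qed

lemma S_self_cong_prime_zero_iff:
  fixes q n :: nat
  assumes q: "prime q" and "q dvd n" and "\<not> q\<^sup>2 dvd n"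
  shows "[S n n = 0] (mod q) \<longleftrightarrow> \<not> (q - 1) dvd n"
proof -
  have "n > 0" using assms(3) by (rule contrapos_np) simp
  have "\<not> q dvd n div q"
    using q \<open>q dvd n\<close> \<open>\<not> q\<^sup>2 dvd n\<close> by (simp add: dvd_div_iff_mult power2_eq_square)
  moreover have "\<not> q dvd q - 1"
    using prime_gt_1_nat[OF q] by (auto dest: dvd_imp_le)
  ultimately have "\<not> [n div q * (q - 1) = 0] (mod q)"
    using q by (simp add: cong_0_iff prime_dvd_mult_iff)
  moreover note S_self_cong_prime[OF q \<open>q dvd n\<close> \<open>n > 0\<close>]
  ultimately show ?thesis
    by (cases "(q - 1) dvd n") (simp_all, (metis cong_sym cong_trans)+)
qed

lemma S_self_cong_prime_square_iff:
  fixes p n :: nat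
  assumes p: "prime p" and "p\<^sup>2 dvd n" and "n > 0"
  shows "[S n n = p] (mod p\<^sup>2) \<longleftrightarrow> (p - 1) dvd n \<and> [n div p\<^sup>2 + 1 = 0] (mod p)"
proof -
  have "p > 0" using p prime_gt_0_nat by blast
  have "[n div p\<^sup>2 * (p * (p - 1)) = p] (mod p\<^sup>2)
      \<longleftrightarrow> [p * (n div p\<^sup>2 * (p - 1)) = p * 1] (mod p * p)"
    by (simp add: power2_eq_square ac_simps)
  also have "\<dots> \<longleftrightarrow> [n div p\<^sup>2 * (p - 1) = 1] (mod p)"
    by (rule cong_mult_left_modulus_iff) fact
  also have "\<dots> \<longleftrightarrow> [n div p\<^sup>2 + 1 = 0] (mod p)"
    by (rule cong_mult_pred_modulus_iff) fact
  finally have "[n div p\<^sup>2 * (p * (p - 1)) = p] (mod p\<^sup>2) \<longleftrightarrow> [n div p\<^sup>2 + 1 = 0] (mod p)" .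
  moreover have "\<not> [p = 0] (mod p\<^sup>2)"
    using prime_gt_1_nat[OF p] by (auto simp: cong_0_iff power2_eq_square dest: dvd_imp_le)
  moreover note S_self_cong_prime_square[OF assms]
  ultimately show ?thesis
    by (cases "(p - 1) dvd n") (simp_all, (metis cong_sym cong_trans)+)
qed

lemma prime_factorization_squarefree_outside:
  fixes p n :: nat
  assumes "n > 0" and "prime p"
    and squarefree: "\<And>q. q \<in> prime_factors n \<Longrightarrow> q \<noteq> p \<Longrightarrow> \<not> q\<^sup>2 dvd n"
  shows "n = p ^ multiplicity p n * \<Prod>(prime_factors n - {p})"
proof -
  have "multiplicity q n = 1" if "q \<in> prime_factors n - {p}" for q
  proof -
    have "multiplicity q n > 0"
      using that \<open>n > 0\<close> by (auto simp: in_prime_factors_iff prime_multiplicity_gt_zero_iff)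
    moreover have "\<not> 2 \<le> multiplicity q n"
      using that squarefree multiplicity_dvd' by blast
    ultimately show ?thesis by linarith
  qed
  then have "(\<Prod>r\<in>prime_factors n - {p}. r ^ multiplicity r n) = \<Prod>(prime_factors n - {p})"
    by simp
  moreover have "(\<Prod>r\<in>prime_factors n. r ^ multiplicity r n)
      = p ^ multiplicity p n * (\<Prod>r\<in>prime_factors n - {p}. r ^ multiplicity r n)"
  proof (cases "p \<in> prime_factors n")
    case False
    with assms(1,2) have "multiplicity p n = 0"
      by (simp add: in_prime_factors_iff not_dvd_imp_multiplicity_0)
    with False show ?thesis by simp
  qed (simp add: prod.remove)
  ultimately show ?thesis
    using prod_prime_factors[of n] \<open>n > 0\<close> by simp
qed

definition admissible_factorization :: "nat \<Rightarrow> nat \<Rightarrow> nat \<Rightarrow> nat set \<Rightarrow> bool" where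
  "admissible_factorization p n s Q \<longleftrightarrow>
     s \<le> 2 \<and> finite Q \<and> (\<forall>q\<in>Q. prime q \<and> q \<noteq> p) \<and>
     n = p ^ s * (\<Prod>q\<in>Q. q) \<and>
     (\<forall>q\<in>Q. (q - 1) dvd n \<and> [n div q + p = 0] (mod q)) \<and>
     (s = 1 \<longrightarrow> \<not> (p - 1) dvd n) \<and>
     (s = 2 \<longrightarrow> (p - 1) dvd n \<and> [n div p ^ 2 + 1 = 0] (mod p))"

lemma admissible_factorization_if_S_self_cong:
  fixes p n :: nat
  assumes p: "prime p" and "n > 0" and cong: "[S n n = p] (mod n)"
  shows "admissible_factorization p n (multiplicity p n) (prime_factors n - {p})"
proof -
  define s where "s = multiplicity p n"
  have p_power_dvd_iff: "p ^ k dvd n \<longleftrightarrow> k \<le> s" for k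
    unfolding s_def using p \<open>n > 0\<close>
    by (intro power_dvd_iff_le_multiplicity) (auto simp: prime_gt_1_nat)
  have other_primes: "(q - 1) dvd n \<and> [n div q + p = 0] (mod q) \<and> \<not> q\<^sup>2 dvd n"
    if "q \<in> prime_factors n" and "q \<noteq> p" for q
  proof -
    have q: "prime q" "q dvd n" using that by (auto simp: in_prime_factors_iff)
    with that p have "\<not> q dvd p" by (auto dest: primes_dvd_imp_eq)
    with q \<open>n > 0\<close> show ?thesis
      using S_self_cong_prime_conditions cong_dvd_modulus_nat[OF cong q(2)] by blast
  qed
  have p_squared: "(p - 1) dvd n \<and> [n div p\<^sup>2 + 1 = 0] (mod p)" if "2 \<le> s"
    using that cong S_self_cong_prime_square_iff[OF p _ \<open>n > 0\<close>] p_power_dvd_iff[of 2]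
    by (auto intro: cong_dvd_modulus_nat)
  have "s \<le> 2"
  proof (rule ccontr)
    assume "\<not> s \<le> 2"
    then have "p * p\<^sup>2 dvd n" using p_power_dvd_iff[of 3] by (simp add: power_numeral_reduce)
    moreover have "p\<^sup>2 dvd n" using \<open>\<not> s \<le> 2\<close> p_power_dvd_iff[of 2] by simp
    ultimately have "p dvd n div p\<^sup>2" using p by (simp add: dvd_div_iff_mult prime_gt_0_nat)
    moreover have "p dvd n div p\<^sup>2 + 1"
      using p_squared \<open>\<not> s \<le> 2\<close> by (simp add: cong_0_iff)
    ultimately have "p dvd 1" by (metis dvd_add_right_iff)
    with p show False by simp
  qed
  moreover have "\<not> (p - 1) dvd n" if "s = 1"
  proof -
    have "p dvd n" "\<not> p\<^sup>2 dvd n" using that p_power_dvd_iff[of 1] p_power_dvd_iff[of 2] by auto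
    moreover have "[S n n = 0] (mod p)"
      using cong_dvd_modulus_nat[OF cong \<open>p dvd n\<close>] by (simp add: cong_def)
    ultimately show ?thesis using S_self_cong_prime_zero_iff[OF p] by blast
  qed
  moreover have "n = p ^ s * \<Prod>(prime_factors n - {p})"
    unfolding s_def using \<open>n > 0\<close> p
    by (rule prime_factorization_squarefree_outside) (use other_primes in blast)
  ultimately show ?thesis
    using other_primes p_squared
    by (auto simp: admissible_factorization_def s_def in_prime_factors_iff)
qed

lemma S_self_cong_if_admissible_factorization:
  fixes p n s :: nat and Q :: "nat set"
  assumes p: "prime p" and "n > 0" and "admissible_factorization p n s Q"
  shows "[S n n = p] (mod n)"
proof -
  from assms(3) have "s \<le> 2" and "finite Q" and Q: "\<And>q. q \<in> Q \<Longrightarrow> prime q \<and> q \<noteq> p"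
    and n: "n = p ^ s * \<Prod>Q"
    and Q_cong: "\<And>q. q \<in> Q \<Longrightarrow> (q - 1) dvd n \<and> [n div q + p = 0] (mod q)"
    and s1: "s = 1 \<Longrightarrow> \<not> (p - 1) dvd n"
    and s2: "s = 2 \<Longrightarrow> (p - 1) dvd n \<and> [n div p ^ 2 + 1 = 0] (mod p)"
    unfolding admissible_factorization_def by blast+
  have "p ^ s dvd n" using n by simp
  have "[S n n = p] (mod p ^ s)"
  proof -
    consider "s = 0" | "s = 1" | "s = 2" using \<open>s \<le> 2\<close> by linarith
    then show ?thesis
    proof cases
      case 2
      with s1 have "[S n n = 0] (mod p)"
        using S_self_cong_prime[OF p _ \<open>n > 0\<close>] \<open>p ^ s dvd n\<close> by simp
      with 2 show ?thesis by (simp add: cong_def)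
    next
      case 3
      with s2 show ?thesis
        using S_self_cong_prime_square_iff[OF p _ \<open>n > 0\<close>] \<open>p ^ s dvd n\<close> by simp
    qed simp
  qed
  moreover have "[S n n = p] (mod \<Prod>Q)"
  proof (rule coprime_cong_prod_nat)
    fix q assume "q \<in> Q"
    with Q p have "prime q" "\<not> q dvd p" by (auto dest: primes_dvd_imp_eq)
    moreover have "q dvd n"
      using dvd_prodI[OF \<open>finite Q\<close> \<open>q \<in> Q\<close>, of id] n by simp
    ultimately show "[S n n = p] (mod q)"
      using S_self_cong_prime_iff[OF _ _ \<open>n > 0\<close>] Q_cong[OF \<open>q \<in> Q\<close>] by blast
  qed (use Q in \<open>auto intro: primes_coprime\<close>)
  moreover have "coprime (p ^ s) (\<Prod>Q)"
    using Q p by (auto intro!: prod_coprime_right primes_coprime)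
  ultimately show ?thesis
    using n coprime_cong_mult_nat by simp
qed

theorem theorem1:
  fixes p n :: nat
  assumes "prime p" and "n > 0"
  shows "n \<in> M (int p) \<longleftrightarrow>
    (\<exists>s (Q :: nat set).
       s \<le> 2 \<and> finite Q \<and> (\<forall>q\<in>Q. prime q \<and> q \<noteq> p) \<and>
       n = p ^ s * (\<Prod>q\<in>Q. q) \<and>
       (\<forall>q\<in>Q. (q - 1) dvd n \<and> [n div q + p = 0] (mod q)) \<and>
       (s = 1 \<longrightarrow> \<not> (p - 1) dvd n) \<and>
       (s = 2 \<longrightarrow> (p - 1) dvd n \<and> [n div p ^ 2 + 1 = 0] (mod p)))"
proof -
  have "n \<in> M (int p) \<longleftrightarrow> [S n n = p] (mod n)"
    using assms(2) by (simp add: M_def cong_int_iff)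
  also have "\<dots> \<longleftrightarrow> (\<exists>s Q. admissible_factorization p n s Q)"
    using admissible_factorization_if_S_self_cong S_self_cong_if_admissible_factorization assms
    by blast
  finally show ?thesis
    unfolding admissible_factorization_def .
qed

end
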